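(* Almost all graphs $G$ have a $\chi_{harm}$-mate; i.e. the harmonious polynomial $\chi_{harm}$ is weakly distinguishing.
   Context: All graphs are finite and simple. For $k\in\mathbb{N}$, a harmonious colouring of $G$ with $k$ colours is a map $f:V(G)\to[k]$ that is a proper colouring and such that for all $i,j\in[k]$ the induced subgraph $G[f^{-1}(i)\cup f^{-1}(j)]$ has at most one edge. $\chi_{harm}(G;\lambda)$ denotes the number of harmonious colourings of $G$ with $\lambda$ colours; it is a polynomial in $\lambda$. For a graph polynomial $P$, $H$ is a $P$-mate of $G$ if $P(G)=P(H)$ but $H\not\cong G$; $G$ is $P$-unique if it has no $P$-mate. Let $\mathcal{G}(n)$ be the set of isomorphism classes of graphs on $n$ vertices and $U_P(n)$ the set of $P$-unique graphs in $\mathcal{G}(n)$; $P$ is weakly distinguishing if $\lim_{n\to\infty}|U_P(n)|/|\mathcal{G}(n)|=0$. *)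

theory Defs
  imports Complex_Main "HOL-Library.FuncSet"
begin

definition graphs :: "nat \<Rightarrow> nat set set set" where
  "graphs n = {E. E \<subseteq> {{u, v} | u v. u < n \<and> v < n \<and> u \<noteq> v}}"

definition graph_iso :: "nat \<Rightarrow> nat set set \<Rightarrow> nat \<Rightarrow> nat set set \<Rightarrow> bool" where
  "graph_iso n E m F \<longleftrightarrow> (\<exists>p. bij_betw p {0..<n} {0..<m} \<and> (\<lambda>e. p ` e) ` E = F)"

definition harmonious :: "nat \<Rightarrow> nat set set \<Rightarrow> nat \<Rightarrow> (nat \<Rightarrow> nat) \<Rightarrow> bool" where
  "harmonious n E k f \<longleftrightarrow>
     f \<in> {0..<n} \<rightarrow>\<^sub>E {0..<k} \<and>
     (\<forall>u v. {u, v} \<in> E \<longrightarrow> f u \<noteq> f v) \<and>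
     (\<forall>i<k. \<forall>j<k. card {e \<in> E. e \<subseteq> {x \<in> {0..<n}. f x = i \<or> f x = j}} \<le> 1)"

definition harm_count :: "nat \<Rightarrow> nat set set \<Rightarrow> nat \<Rightarrow> nat" where
  "harm_count n E k = card {f. harmonious n E k f}"

text \<open>chi_harm(G) = chi_harm(H) as polynomials, i.e. equal at every natural lambda.\<close>
definition harm_eq :: "nat \<Rightarrow> nat set set \<Rightarrow> nat \<Rightarrow> nat set set \<Rightarrow> bool" where
  "harm_eq n E m F \<longleftrightarrow> (\<forall>k. harm_count n E k = harm_count m F k)"

definition harm_unique :: "nat \<Rightarrow> nat set set \<Rightarrow> bool" where
  "harm_unique n E \<longleftrightarrow>
     (\<forall>m F. F \<in> graphs m \<and> harm_eq n E m F \<longrightarrow> graph_iso n E m F)"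

definition iso_classes :: "nat \<Rightarrow> nat set set set set" where
  "iso_classes n = graphs n // {(E, F). E \<in> graphs n \<and> F \<in> graphs n \<and> graph_iso n E n F}"

definition unique_classes :: "nat \<Rightarrow> nat set set set set" where
  "unique_classes n = {C \<in> iso_classes n. \<forall>E \<in> C. harm_unique n E}"

end

theory Submission
  imports Defs "HOL-Combinatorics.Permutations" "HOL-Real_Asymp.Real_Asymp"
begin

text \<open>
  If every two vertices of G are adjacent or have a common neighbour, then two vertices of the
  same colour in a harmonious colouring would either be adjacent or give two edges between the
  same two colour classes; so the harmonious colourings of G are exactly the injective maps, and
  all such graphs on n vertices share chi_harm. Hence at most one of their isomorphism classes is
  chi_harm-unique, and it suffices to show that the other classes are a vanishing fraction of
  the at least 2^N / n! classes, where N = n choose 2.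

  Weighting each class by the automorphism groups of its members (orbit-stabiliser), n! times
  the number of these classes is at most the number of graphs in which some two vertices have
  no common neighbour, which is at most n^2 (3/4)^(n-2) 2^N, plus the number of pairs (s, G) of
  a non-identity permutation s and a graph G fixed by s. If s moves m vertices, a greedy choice
  gives a set D of at least m n / 24 vertex pairs disjoint from its image under s; a graph fixed
  by s contains e iff it contains s ` e, so s fixes at most 2^(N - m n / 24) graphs. As at most
  n^(2m) permutations move m vertices, the second term is at most n^3 2^(-n/24) 2^N.
\<close>

section \<open>Graphs and the action of vertex permutations\<close>

definition vertex_pairs :: "nat \<Rightarrow> nat set set" where
  "vertex_pairs n = {{u, v} | u v. u < n \<and> v < n \<and> u \<noteq> v}"

lemma graphs_eq_Pow: "graphs n = Pow (vertex_pairs n)"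
  unfolding graphs_def vertex_pairs_def by auto

lemma vertex_pairs_eq: "vertex_pairs n = {e. e \<subseteq> {0..<n} \<and> card e = 2}"
  unfolding vertex_pairs_def card_2_iff by (auto; blast)

lemma doubleton_in_vertex_pairs: "u < n \<Longrightarrow> v < n \<Longrightarrow> u \<noteq> v \<Longrightarrow> {u, v} \<in> vertex_pairs n"
  unfolding vertex_pairs_def by blast

lemma finite_vertex_pairs: "finite (vertex_pairs n)"
  unfolding vertex_pairs_eq by (rule finite_subset[of _ "Pow {0..<n}"]) auto

lemma card_vertex_pairs: "card (vertex_pairs n) = n choose 2"
  unfolding vertex_pairs_eq using n_subsets[of "{0..<n}" 2] by simp

lemma finite_graphs: "finite (graphs n)"
  by (simp add: graphs_eq_Pow finite_vertex_pairs)

lemma card_graphs: "card (graphs n) = 2 ^ card (vertex_pairs n)"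
  by (simp add: graphs_eq_Pow finite_vertex_pairs card_Pow)

lemma finite_graph: "E \<in> graphs n \<Longrightarrow> finite E"
  using finite_vertex_pairs by (auto simp: graphs_eq_Pow intro: finite_subset)

lemma edge_in_graphsD: "E \<in> graphs n \<Longrightarrow> e \<in> E \<Longrightarrow> e \<subseteq> {0..<n} \<and> card e = 2"
  by (auto simp: graphs_eq_Pow vertex_pairs_eq)

lemma doubleton_in_graphsD: "E \<in> graphs n \<Longrightarrow> {u, v} \<in> E \<Longrightarrow> u < n \<and> v < n \<and> u \<noteq> v"
  by (auto simp: graphs_def doubleton_eq_iff)

definition permute_graph :: "(nat \<Rightarrow> nat) \<Rightarrow> nat set set \<Rightarrow> nat set set" where
  "permute_graph p E = (\<lambda>e. p ` e) ` E"

lemma permute_graph_id: "permute_graph id E = E"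
  by (simp add: permute_graph_def)

lemma permute_graph_comp: "permute_graph (p \<circ> q) E = permute_graph p (permute_graph q E)"
  by (simp add: permute_graph_def image_comp)

lemma permute_graph_inv: "p permutes S \<Longrightarrow> permute_graph (inv p) (permute_graph p E) = E"
  by (metis permute_graph_comp permute_graph_id permutes_inv_o(2))

lemma image_in_permute_graph_iff: "inj p \<Longrightarrow> p ` e \<in> permute_graph p E \<longleftrightarrow> e \<in> E"
  by (auto simp: permute_graph_def inj_image_eq_iff)

lemma image_in_vertex_pairs:
  assumes "p permutes {0..<n}" and "e \<in> vertex_pairs n"
  shows "p ` e \<in> vertex_pairs n"
proof -
  have "p ` e \<subseteq> p ` {0..<n}" and "card (p ` e) = card e"
    using assms by (auto simp: vertex_pairs_eq card_image inj_on_subset[OF permutes_inj])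
  with assms show ?thesis
    by (simp add: vertex_pairs_eq permutes_image)
qed

lemma permute_graph_in_graphs: "p permutes {0..<n} \<Longrightarrow> E \<in> graphs n \<Longrightarrow> permute_graph p E \<in> graphs n"
  by (auto simp: graphs_eq_Pow permute_graph_def image_in_vertex_pairs)

lemma graph_iso_iff_permute_graph:
  assumes "E \<in> graphs n"
  shows "graph_iso n E n F \<longleftrightarrow> (\<exists>p. p permutes {0..<n} \<and> permute_graph p E = F)"
proof
  assume "graph_iso n E n F"
  then obtain p where p: "bij_betw p {0..<n} {0..<n}" and F: "permute_graph p E = F"
    unfolding graph_iso_def permute_graph_def by blast
  define q where "q x = (if x < n then p x else x)" for x
  have "bij_betw q {0..<n} {0..<n}"
    using p by (rule bij_betw_cong[THEN iffD1, rotated]) (simp add: q_def)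
  then have "q permutes {0..<n}"
    by (rule bij_imp_permutes) (simp add: q_def)
  moreover have "permute_graph q E = permute_graph p E"
    unfolding permute_graph_def
    using edge_in_graphsD[OF assms] by (intro image_cong refl) (force simp: q_def)
  ultimately show "\<exists>p. p permutes {0..<n} \<and> permute_graph p E = F"
    using F by blast
next
  assume "\<exists>p. p permutes {0..<n} \<and> permute_graph p E = F"
  then show "graph_iso n E n F"
    unfolding graph_iso_def permute_graph_def using permutes_imp_bij by blast
qed

definition iso_rel :: "nat \<Rightarrow> (nat set set \<times> nat set set) set" where
  "iso_rel n = {(E, F). E \<in> graphs n \<and> F \<in> graphs n \<and> graph_iso n E n F}"

lemma iso_classes_eq: "iso_classes n = graphs n // iso_rel n"
  by (simp add: iso_classes_def iso_rel_def)

lemma iso_rel_iff: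
  "(E, F) \<in> iso_rel n \<longleftrightarrow> E \<in> graphs n \<and> (\<exists>p. p permutes {0..<n} \<and> permute_graph p E = F)"
  unfolding iso_rel_def using graph_iso_iff_permute_graph permute_graph_in_graphs by blast

lemma equiv_iso_rel: "equiv (graphs n) (iso_rel n)"
proof (rule equivI)
  show "iso_rel n \<subseteq> graphs n \<times> graphs n"
    by (auto simp: iso_rel_def)
  show "refl_on (graphs n) (iso_rel n)"
    by (rule refl_onI) (auto simp: iso_rel_iff intro!: exI[of _ id] permute_graph_id)
  show "sym (iso_rel n)"
  proof (rule symI)
    fix E F assume "(E, F) \<in> iso_rel n"
    then obtain p where "E \<in> graphs n" "p permutes {0..<n}" "F = permute_graph p E"
      by (auto simp: iso_rel_iff)
    then show "(F, E) \<in> iso_rel n"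
      by (auto simp: iso_rel_iff permute_graph_in_graphs permute_graph_inv
          intro!: exI[of _ "inv p"] permutes_inv)
  qed
  show "trans (iso_rel n)"
  proof (rule transI)
    fix E F G assume "(E, F) \<in> iso_rel n" "(F, G) \<in> iso_rel n"
    then obtain p q where "E \<in> graphs n" "p permutes {0..<n}" "q permutes {0..<n}"
      and "F = permute_graph p E" "G = permute_graph q F"
      by (auto simp: iso_rel_iff)
    then show "(E, G) \<in> iso_rel n"
      by (auto simp: iso_rel_iff permute_graph_comp intro!: exI[of _ "q \<circ> p"] permutes_compose)
  qed
qed

lemma iso_class_eq_orbit:
  assumes "C \<in> iso_classes n" and "G \<in> C"
  shows "C = (\<lambda>p. permute_graph p G) ` {p. p permutes {0..<n}}"
proof -
  obtain E where "E \<in> graphs n" and C: "C = iso_rel n `` {E}"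
    using assms(1) unfolding iso_classes_eq by (rule quotientE)
  with assms(2) have EG: "(E, G) \<in> iso_rel n"
    by simp
  then have "C = iso_rel n `` {G}"
    using C equiv_class_eq[OF equiv_iso_rel] by metis
  moreover have "G \<in> graphs n"
    using EG by (simp add: iso_rel_def)
  ultimately show ?thesis
    by (auto simp: iso_rel_iff)
qed

lemma iso_class_subset_graphs: "C \<in> iso_classes n \<Longrightarrow> C \<subseteq> graphs n"
  unfolding iso_classes_eq using equiv_iso_rel by (rule in_quotient_imp_subset)

lemma iso_class_nonempty: "C \<in> iso_classes n \<Longrightarrow> C \<noteq> {}"
  unfolding iso_classes_eq using equiv_iso_rel by (rule in_quotient_imp_non_empty)

lemma finite_iso_classes: "finite (iso_classes n)"
  unfolding iso_classes_eq by (rule finite_quotient[OF finite_graphs equiv_type[OF equiv_iso_rel]])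

lemma finite_iso_class: "C \<in> iso_classes n \<Longrightarrow> finite C"
  using finite_graphs iso_class_subset_graphs by (rule finite_subset[rotated])

lemma card_iso_class_le_fact:
  assumes "C \<in> iso_classes n"
  shows "card C \<le> fact n"
proof -
  obtain G where "G \<in> C"
    using iso_class_nonempty[OF assms] by blast
  then have "card C \<le> card {p. p permutes {0..<n}}"
    using iso_class_eq_orbit[OF assms] card_image_le finite_permutations by (metis finite_atLeastLessThan)
  then show ?thesis
    by (simp add: card_permutations)
qed

lemma card_graphs_le_card_iso_classes_mult_fact:
  "2 ^ card (vertex_pairs n) \<le> card (iso_classes n) * fact n"
proof -
  have "2 ^ card (vertex_pairs n) = card (\<Union>(iso_classes n))"
    using Union_quotient[OF equiv_iso_rel] by (simp add: iso_classes_eq card_graphs)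
  also have "\<dots> \<le> sum card (iso_classes n)"
    by (rule card_Union_le_sum_card)
  also have "\<dots> \<le> card (iso_classes n) * fact n"
    using sum_bounded_above[of "iso_classes n" card "fact n"] card_iso_class_le_fact by simp
  finally show ?thesis .
qed

definition automorphisms :: "nat \<Rightarrow> nat set set \<Rightarrow> (nat \<Rightarrow> nat) set" where
  "automorphisms n G = {p. p permutes {0..<n} \<and> permute_graph p G = G}"

lemma finite_automorphisms: "finite (automorphisms n G)"
  unfolding automorphisms_def using finite_permutations[of "{0..<n}"] by simp

text \<open>Orbit-stabiliser: the permutations carrying G0 to G form a coset of the stabiliser of G.\<close>
lemma fact_le_sum_card_automorphisms:
  assumes C: "C \<in> iso_classes n"
  shows "fact n \<le> (\<Sum>G\<in>C. card (automorphisms n G))"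
proof -
  obtain G0 where G0: "G0 \<in> C"
    using iso_class_nonempty[OF C] by blast
  let ?P = "{p. p permutes {0..<n}}"
  have orbit: "(\<lambda>p. permute_graph p G0) ` ?P \<subseteq> C"
    using iso_class_eq_orbit[OF C G0] by blast
  have "fact n = card ?P"
    by (simp add: card_permutations)
  also have "\<dots> = (\<Sum>G\<in>C. \<Sum>p\<in>{p \<in> ?P. permute_graph p G0 = G}. 1)"
    unfolding card_eq_sum
    by (rule sum.group[symmetric, OF finite_permutations finite_iso_class[OF C] orbit]) simp
  also have "\<dots> = (\<Sum>G\<in>C. card {p \<in> ?P. permute_graph p G0 = G})"
    by simp
  also have "\<dots> \<le> (\<Sum>G\<in>C. card (automorphisms n G))"
  proof (rule sum_mono)
    fix G assume "G \<in> C"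
    then obtain t where t: "t permutes {0..<n}" "permute_graph t G0 = G"
      using iso_class_eq_orbit[OF C G0] by auto
    have "inj_on (\<lambda>p. p \<circ> inv t) {p \<in> ?P. permute_graph p G0 = G}"
    proof (rule inj_onI)
      fix p q assume "p \<circ> inv t = q \<circ> inv t"
      then have "p \<circ> inv t \<circ> t = q \<circ> inv t \<circ> t"
        by simp
      then show "p = q"
        by (simp add: o_assoc[symmetric] permutes_inv_o(2)[OF t(1)])
    qed
    moreover have "(\<lambda>p. p \<circ> inv t) ` {p \<in> ?P. permute_graph p G0 = G} \<subseteq> automorphisms n G"
    proof (rule image_subsetI)
      fix p assume "p \<in> {p \<in> ?P. permute_graph p G0 = G}"
      then show "p \<circ> inv t \<in> automorphisms n G"
        using t permute_graph_inv[OF t(1), of G0]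
        by (auto simp: automorphisms_def permute_graph_comp intro: permutes_compose permutes_inv)
    qed
    ultimately show "card {p \<in> ?P. permute_graph p G0 = G} \<le> card (automorphisms n G)"
      using finite_automorphisms by (rule card_inj_on_le)
  qed
  finally show ?thesis .
qed

section \<open>Graphs of diameter at most two\<close>

definition diameter_le_2 :: "nat \<Rightarrow> nat set set \<Rightarrow> bool" where
  "diameter_le_2 n E \<longleftrightarrow>
     (\<forall>u<n. \<forall>v<n. u \<noteq> v \<longrightarrow> {u, v} \<in> E \<or> (\<exists>w<n. {u, w} \<in> E \<and> {v, w} \<in> E))"

lemma inj_on_imp_harmonious:
  assumes E: "E \<in> graphs n" and f: "f \<in> {0..<n} \<rightarrow>\<^sub>E {0..<k}" and inj: "inj_on f {0..<n}"
  shows "harmonious n E k f"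
proof -
  have "f u \<noteq> f v" if "{u, v} \<in> E" for u v
  proof -
    have "u \<in> {0..<n}" "v \<in> {0..<n}" "u \<noteq> v"
      using doubleton_in_graphsD[OF E that] by auto
    then show ?thesis
      using inj by (auto dest: inj_onD)
  qed
  moreover have "card {e \<in> E. e \<subseteq> S} \<le> 1" if S: "S = {x \<in> {0..<n}. f x = i \<or> f x = j}" for i j S
  proof -
    have "inj_on f S"
      using inj by (rule inj_on_subset) (auto simp: S)
    then have "card S = card (f ` S)"
      by (simp add: card_image)
    also have "\<dots> \<le> card {i, j}"
      by (rule card_mono) (auto simp: S)
    also have "\<dots> \<le> 2"
      by (simp add: card_insert_if)
    finally have "card S \<le> 2" .
    have "finite S"
      by (simp add: S)
    have "e = S" if "e \<in> E" "e \<subseteq> S" for e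
    proof (rule card_seteq[OF \<open>finite S\<close> that(2)])
      show "card S \<le> card e"
        using edge_in_graphsD[OF E that(1)] \<open>card S \<le> 2\<close> by simp
    qed
    then have "{e \<in> E. e \<subseteq> S} \<subseteq> {S}"
      by blast
    then have "card {e \<in> E. e \<subseteq> S} \<le> card {S}"
      by (rule card_mono[rotated]) simp
    then show ?thesis
      by simp
  qed
  ultimately show ?thesis
    using f by (simp add: harmonious_def)
qed

lemma harmonious_imp_inj_on:
  assumes E: "E \<in> graphs n" and diam: "diameter_le_2 n E" and h: "harmonious n E k f"
  shows "inj_on f {0..<n}"
proof (rule inj_onI, rule ccontr)
  fix u v assume u: "u \<in> {0..<n}" and v: "v \<in> {0..<n}" and same: "f u = f v" and "u \<noteq> v"
  have f: "f \<in> {0..<n} \<rightarrow>\<^sub>E {0..<k}" and proper: "\<And>u v. {u, v} \<in> E \<Longrightarrow> f u \<noteq> f v"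
    using h by (auto simp: harmonious_def)
  from same proper have "{u, v} \<notin> E"
    by blast
  with diam u v \<open>u \<noteq> v\<close> obtain w where w: "w < n" "{u, w} \<in> E" "{v, w} \<in> E"
    by (auto simp: diameter_le_2_def)
  have colours: "f u < k" "f w < k"
    using f u w(1) by auto
  let ?T = "{e \<in> E. e \<subseteq> {x \<in> {0..<n}. f x = f u \<or> f x = f w}}"
  have "{{u, w}, {v, w}} \<subseteq> ?T"
    using w u v same by auto
  moreover have "{u, w} \<noteq> {v, w}"
    using \<open>u \<noteq> v\<close> doubleton_in_graphsD[OF E w(2)] by (auto simp: doubleton_eq_iff)
  ultimately have "2 \<le> card ?T"
    using card_mono[of ?T "{{u, w}, {v, w}}"] finite_graph[OF E] by (simp add: card_insert_if)
  moreover have "card ?T \<le> 1"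
    using h colours unfolding harmonious_def by blast
  ultimately show False
    by simp
qed

lemma harmonious_iff_inj_on:
  assumes "E \<in> graphs n" and "diameter_le_2 n E"
  shows "harmonious n E k f \<longleftrightarrow> f \<in> {0..<n} \<rightarrow>\<^sub>E {0..<k} \<and> inj_on f {0..<n}"
proof -
  have "harmonious n E k f \<Longrightarrow> f \<in> {0..<n} \<rightarrow>\<^sub>E {0..<k}"
    by (simp add: harmonious_def)
  then show ?thesis
    using harmonious_imp_inj_on[OF assms] inj_on_imp_harmonious[OF assms(1)] by blast
qed

lemma harm_eq_if_diameter_le_2:
  assumes "E \<in> graphs n" "diameter_le_2 n E" "F \<in> graphs n" "diameter_le_2 n F"
  shows "harm_eq n E n F"
proof -
  have "harmonious n E k f \<longleftrightarrow> harmonious n F k f" for k f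
    using assms by (simp add: harmonious_iff_inj_on)
  then show ?thesis
    by (simp add: harm_eq_def harm_count_def)
qed

definition non_diameter_2_classes :: "nat \<Rightarrow> nat set set set set" where
  "non_diameter_2_classes n = {C \<in> iso_classes n. \<forall>E\<in>C. \<not> diameter_le_2 n E}"

lemma card_unique_classes_le: "card (unique_classes n) \<le> card (non_diameter_2_classes n) + 1"
proof -
  let ?U = "unique_classes n" and ?D = "non_diameter_2_classes n"
  have finU: "finite ?U" and finD: "finite ?D"
    using finite_iso_classes by (simp_all add: unique_classes_def non_diameter_2_classes_def)
  have "\<forall>C1\<in>?U - ?D. \<forall>C2\<in>?U - ?D. C1 = C2"
  proof (intro ballI)
    fix C1 C2 assume C1: "C1 \<in> ?U - ?D" and C2: "C2 \<in> ?U - ?D"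
    then obtain E1 E2 where E: "E1 \<in> C1" "diameter_le_2 n E1" "E2 \<in> C2" "diameter_le_2 n E2"
      by (auto simp: unique_classes_def non_diameter_2_classes_def)
    have classes: "C1 \<in> graphs n // iso_rel n" "C2 \<in> graphs n // iso_rel n"
      using C1 C2 by (auto simp: unique_classes_def iso_classes_eq)
    then have graphs: "E1 \<in> graphs n" "E2 \<in> graphs n"
      using E iso_class_subset_graphs by (auto simp: iso_classes_eq)
    have "harm_unique n E1"
      using C1 E(1) by (simp add: unique_classes_def)
    then have "graph_iso n E1 n E2"
      using graphs harm_eq_if_diameter_le_2[OF graphs(1) E(2) graphs(2) E(4)]
      by (simp add: harm_unique_def)
    then show "C1 = C2"
      using graphs by (intro quotient_eqI[OF equiv_iso_rel classes E(1) E(3)]) (simp add: iso_rel_def)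
  qed
  then have "card (?U - ?D) \<le> 1"
    using finU by (simp add: card_le_Suc0_iff_eq)
  moreover have "card ?U \<le> card (?D \<union> (?U - ?D))"
    using finU finD by (intro card_mono) auto
  moreover have "card (?D \<union> (?U - ?D)) \<le> card ?D + card (?U - ?D)"
    by (rule card_Un_le)
  ultimately show ?thesis
    by simp
qed

section \<open>Graphs of diameter greater than two are rare\<close>

text \<open>Counting subsets E of P by recording E outside the blocks and the pattern E \<inter> B i on each block.\<close>
lemma card_le_by_block_patterns:
  fixes P :: "'a set" and S :: "'a set set" and B :: "'i \<Rightarrow> 'a set" and Pat :: "'i \<Rightarrow> 'a set set"
  assumes P: "finite P" and I: "finite I" and BP: "\<forall>i\<in>I. B i \<subseteq> P" and disj: "disjoint_family_on B I"
    and SP: "S \<subseteq> Pow P" and S_Pat: "\<forall>E\<in>S. \<forall>i\<in>I. E \<inter> B i \<in> Pat i" and Pat: "\<forall>i\<in>I. Pat i \<subseteq> Pow (B i)"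
  shows "card S * 2 ^ (\<Sum>i\<in>I. card (B i)) \<le> 2 ^ card P * (\<Prod>i\<in>I. card (Pat i))"
proof -
  define U where "U = (\<Union>i\<in>I. B i)"
  have UP: "U \<subseteq> P"
    using BP by (auto simp: U_def)
  have finB: "\<forall>i\<in>I. finite (B i)"
    using BP P finite_subset by blast
  have card_U: "card U = (\<Sum>i\<in>I. card (B i))"
    unfolding U_def using I finB disj by (simp add: card_UN_disjoint disjoint_family_on_def)
  have card_P: "card P = card (P - U) + card U"
    using UP P by (simp add: card_Diff_subset card_mono finite_subset)
  define code where "code E = (E - U, restrict (\<lambda>i. E \<inter> B i) I)" for E
  have "inj_on code S"
  proof (rule inj_onI)
    fix E E' assume "E \<in> S" "E' \<in> S" and eq: "code E = code E'"
    then have outside: "E - U = E' - U"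
      by (simp add: code_def)
    have inside: "E \<inter> B i = E' \<inter> B i" if "i \<in> I" for i
    proof -
      have "restrict (\<lambda>i. E \<inter> B i) I i = restrict (\<lambda>i. E' \<inter> B i) I i"
        using eq by (simp add: code_def)
      with that show ?thesis
        by simp
    qed
    from outside inside show "E = E'"
      unfolding U_def by blast
  qed
  moreover have "code ` S \<subseteq> Pow (P - U) \<times> (\<Pi>\<^sub>E i\<in>I. Pat i)"
    using SP S_Pat by (auto simp: code_def)
  moreover have "finite (Pow (P - U) \<times> (\<Pi>\<^sub>E i\<in>I. Pat i))"
  proof -
    have "finite (Pat i)" if "i \<in> I" for i
      using Pat finB that by (meson finite_Pow_iff finite_subset)
    then show ?thesis
      using P I by (simp add: finite_PiE)
  qed
  ultimately have "card S \<le> card (Pow (P - U) \<times> (\<Pi>\<^sub>E i\<in>I. Pat i))"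
    by (rule card_inj_on_le)
  also have "\<dots> = 2 ^ card (P - U) * (\<Prod>i\<in>I. card (Pat i))"
    using P I by (simp add: card_cartesian_product card_Pow card_PiE)
  finally show ?thesis
    unfolding card_P card_U[symmetric] by (simp add: power_add mult_ac)
qed

lemma card_graphs_without_common_neighbour:
  assumes u: "u < n" and v: "v < n" and "u \<noteq> v"
  shows "real (card {E \<in> graphs n. \<forall>w<n. \<not> ({u, w} \<in> E \<and> {v, w} \<in> E)})
    \<le> 2 ^ card (vertex_pairs n) * (3 / 4) ^ (n - 2)"
proof -
  let ?S = "{E \<in> graphs n. \<forall>w<n. \<not> ({u, w} \<in> E \<and> {v, w} \<in> E)}"
  define I where "I = {0..<n} - {u, v}"
  define B where "B w = {{u, w}, {v, w}}" for w :: nat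
  have card_I: "card I = n - 2"
    using u v \<open>u \<noteq> v\<close> by (simp add: I_def card_Diff_subset)
  have card_B: "card (B w) = 2" if "w \<in> I" for w
    using that \<open>u \<noteq> v\<close> by (auto simp: B_def I_def doubleton_eq_iff)
  have card_Al: "card (Pow (B w) - {B w}) = 3" if "w \<in> I" for w
    using card_B[OF that] by (simp add: B_def card_Diff_singleton card_Pow)
  have sum_B: "(\<Sum>w\<in>I. card (B w)) = 2 * (n - 2)"
    using card_I card_B by simp
  have prod_Al: "(\<Prod>w\<in>I. card (Pow (B w) - {B w})) = 3 ^ (n - 2)"
    using card_I card_Al by simp
  have "card ?S * 2 ^ (\<Sum>w\<in>I. card (B w)) \<le> 2 ^ card (vertex_pairs n) * (\<Prod>w\<in>I. card (Pow (B w) - {B w}))"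
  proof (rule card_le_by_block_patterns[OF finite_vertex_pairs])
    show "\<forall>w\<in>I. B w \<subseteq> vertex_pairs n"
      using u v \<open>u \<noteq> v\<close> by (auto simp: I_def B_def intro!: doubleton_in_vertex_pairs)
    show "disjoint_family_on B I"
      by (auto simp: disjoint_family_on_def I_def B_def doubleton_eq_iff)
    show "\<forall>E\<in>?S. \<forall>w\<in>I. E \<inter> B w \<in> Pow (B w) - {B w}"
      by (auto simp: I_def B_def)
  qed (auto simp: I_def graphs_eq_Pow)
  then have "card ?S * 4 ^ (n - 2) \<le> 2 ^ card (vertex_pairs n) * 3 ^ (n - 2)"
    unfolding sum_B prod_Al by (simp add: power_mult)
  then have "real (card ?S * 4 ^ (n - 2)) \<le> real (2 ^ card (vertex_pairs n) * 3 ^ (n - 2))"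
    by (rule of_nat_mono)
  then show ?thesis
    by (simp add: power_divide field_simps)
qed

definition non_diameter_2_graphs :: "nat \<Rightarrow> nat set set set" where
  "non_diameter_2_graphs n = {E \<in> graphs n. \<not> diameter_le_2 n E}"

lemma card_non_diameter_2_graphs_le:
  "real (card (non_diameter_2_graphs n)) \<le> 2 ^ card (vertex_pairs n) * (real n ^ 2 * (3 / 4) ^ (n - 2))"
proof -
  let ?I = "{(u, v). u < n \<and> v < n \<and> u \<noteq> v}"
  let ?S = "\<lambda>(u, v). {E \<in> graphs n. \<forall>w<n. \<not> ({u, w} \<in> E \<and> {v, w} \<in> E)}"
  have "non_diameter_2_graphs n \<subseteq> (\<Union>p\<in>?I. ?S p)"
    by (force simp: non_diameter_2_graphs_def diameter_le_2_def)
  moreover have "finite (\<Union>p\<in>?I. ?S p)"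
    by (rule finite_subset[OF _ finite_graphs]) auto
  ultimately have "card (non_diameter_2_graphs n) \<le> card (\<Union>p\<in>?I. ?S p)"
    by (rule card_mono[rotated])
  also have "\<dots> \<le> (\<Sum>p\<in>?I. card (?S p))"
    by (rule card_UN_le) (rule finite_subset[of _ "{0..<n} \<times> {0..<n}"], auto)
  finally have "real (card (non_diameter_2_graphs n)) \<le> (\<Sum>p\<in>?I. real (card (?S p)))"
    by (simp only: of_nat_sum[symmetric] of_nat_le_iff)
  also have "\<dots> \<le> (\<Sum>p\<in>?I. 2 ^ card (vertex_pairs n) * (3 / 4) ^ (n - 2))"
    by (rule sum_mono) (use card_graphs_without_common_neighbour in auto)
  also have "\<dots> \<le> real n ^ 2 * (2 ^ card (vertex_pairs n) * (3 / 4) ^ (n - 2))"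
  proof -
    have "card ?I \<le> n ^ 2"
      using card_mono[of "{0..<n} \<times> {0..<n}" ?I] by (fastforce simp: power2_eq_square card_cartesian_product)
    then have "real (card ?I) \<le> real n ^ 2"
      by (simp only: of_nat_power[symmetric] of_nat_le_iff)
    then show ?thesis
      by (simp add: mult_right_mono)
  qed
  finally show ?thesis
    by (simp add: mult_ac)
qed

section \<open>Graphs fixed by a non-identity permutation\<close>

text \<open>Greedy choice: taking a point of M removes at most three candidates, itself, its image and its preimage.\<close>
lemma exists_subset_disjoint_image:
  assumes "finite M" and "inj s" and "\<forall>x\<in>M. s x \<noteq> x"
  shows "\<exists>A\<subseteq>M. A \<inter> s ` A = {} \<and> card M \<le> 3 * card A"
  using assms(1,3)
proof (induction M rule: finite_psubset_induct)
  case (psubset M)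
  show ?case
  proof (cases "M = {}")
    case False
    then obtain a where a: "a \<in> M"
      by blast
    define M' where "M' = M - {a, s a, inv s a}"
    have "M' \<subset> M"
      using a by (auto simp: M'_def)
    then obtain A' where A': "A' \<subseteq> M'" "A' \<inter> s ` A' = {}" "card M' \<le> 3 * card A'"
      using psubset by (meson psubset_imp_subset subset_iff)
    have "a \<notin> s ` A'"
      using A'(1) assms(2) by (auto simp: M'_def)
    then have "insert a A' \<inter> s ` insert a A' = {}"
      using A' a psubset.prems by (auto simp: M'_def)
    moreover have "card M \<le> 3 * card (insert a A')"
    proof -
      have "a \<notin> A'"
        using A'(1) by (auto simp: M'_def)
      have "card M \<le> card (M' \<union> {a, s a, inv s a})"
        using psubset.hyps by (intro card_mono) (auto simp: M'_def)
      also have "\<dots> \<le> card M' + card {a, s a, inv s a}"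
        by (rule card_Un_le)
      also have "\<dots> \<le> card M' + 3"
        by (simp add: card_insert_if)
      also have "\<dots> \<le> 3 * card (insert a A')"
        using A'(3) \<open>a \<notin> A'\<close> finite_subset[OF A'(1)] psubset.hyps by (simp add: M'_def)
      finally show ?thesis .
    qed
    moreover have "insert a A' \<subseteq> M"
      using A'(1) a by (auto simp: M'_def)
    ultimately show ?thesis
      by blast
  qed simp
qed

lemma card_fixed_graphs_le:
  assumes s: "s permutes {0..<n}" and D: "D \<subseteq> vertex_pairs n" and disj: "D \<inter> (\<lambda>e. s ` e) ` D = {}"
  shows "card {E \<in> graphs n. permute_graph s E = E} * 2 ^ card D \<le> 2 ^ card (vertex_pairs n)"
proof -
  let ?Fix = "{E \<in> graphs n. permute_graph s E = E}"
  define B where "B e = {e, s ` e}" for e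
  have inj: "inj s"
    using s by (rule permutes_inj)
  have finD: "finite D"
    using finite_vertex_pairs D by (rule finite_subset[rotated])
  have card_B: "card (B e) = 2" if "e \<in> D" for e
  proof -
    have "e \<noteq> s ` e"
      using that disj by blast
    then show ?thesis
      by (simp add: B_def)
  qed
  have "card ?Fix * 2 ^ (\<Sum>e\<in>D. card (B e)) \<le> 2 ^ card (vertex_pairs n) * (\<Prod>e\<in>D. card {{}, B e})"
  proof (rule card_le_by_block_patterns[OF finite_vertex_pairs finD])
    show "\<forall>e\<in>D. B e \<subseteq> vertex_pairs n"
      using D image_in_vertex_pairs[OF s] by (auto simp: B_def)
    show "disjoint_family_on B D"
      unfolding disjoint_family_on_def B_def using disj by (auto simp: inj_image_eq_iff[OF inj])
    show "\<forall>E\<in>?Fix. \<forall>e\<in>D. E \<inter> B e \<in> {{}, B e}"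
    proof (intro ballI)
      fix E e assume "E \<in> ?Fix" "e \<in> D"
      then have "s ` e \<in> E \<longleftrightarrow> e \<in> E"
        using image_in_permute_graph_iff[OF inj, of e E] by simp
      then show "E \<inter> B e \<in> {{}, B e}"
        by (auto simp: B_def)
    qed
  qed (auto simp: graphs_eq_Pow)
  moreover have "(\<Sum>e\<in>D. card (B e)) = card D + card D"
    using card_B by simp
  moreover have "(\<Prod>e\<in>D. card {{}, B e}) = 2 ^ card D"
  proof -
    have "card {{}, B e} = 2" if "e \<in> D" for e
      using card_B[OF that] by (auto simp: card_insert_if)
    then show ?thesis
      by simp
  qed
  ultimately have "card ?Fix * 2 ^ card D * 2 ^ card D \<le> 2 ^ card (vertex_pairs n) * 2 ^ card D"
    by (simp add: power_add mult.assoc)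
  then show ?thesis
    by simp
qed

lemma exists_vertex_pairs_disjoint_image:
  assumes A: "A \<subseteq> {0..<n}" and disj: "A \<inter> s ` A = {}"
  shows "\<exists>D\<subseteq>vertex_pairs n. D \<inter> (\<lambda>e. s ` e) ` D = {} \<and> card A * (n - 2 * card A) \<le> card D"
proof -
  define W where "W = {0..<n} - A - s ` A"
  define D where "D = (\<lambda>(a, w). {a, w}) ` (A \<times> W)"
  have "finite A"
    using A by (simp add: finite_subset)
  have "n \<le> card (W \<union> A \<union> s ` A)"
    using card_mono[of "W \<union> A \<union> s ` A" "{0..<n}"] \<open>finite A\<close> by (auto simp: W_def)
  also have "\<dots> \<le> card W + card A + card (s ` A)"
    by (meson add_le_mono card_Un_le le_refl order_trans)
  also have "card (s ` A) \<le> card A"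
    using \<open>finite A\<close> by (rule card_image_le)
  finally have "n - 2 * card A \<le> card W"
    by linarith
  moreover have "card D = card A * card W"
  proof -
    have "inj_on (\<lambda>(a, w). {a, w}) (A \<times> W)"
      by (auto simp: inj_on_def doubleton_eq_iff W_def)
    then show ?thesis
      by (simp add: D_def card_image card_cartesian_product)
  qed
  moreover have "D \<subseteq> vertex_pairs n"
    using A by (auto simp: D_def W_def intro!: doubleton_in_vertex_pairs)
  moreover have "D \<inter> (\<lambda>e. s ` e) ` D = {}"
  proof -
    have "s a \<notin> e" if "e \<in> D" "a \<in> A" for e a
      using that disj by (auto simp: D_def W_def)
    then have "s ` e \<notin> D" if "e \<in> D" for e
      using that by (auto simp: D_def)
    then show ?thesis
      by blast
  qed
  ultimately show ?thesis
    by (metis mult_le_mono2)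
qed

lemma obtain_vertex_pairs_disjoint_image:
  assumes s: "s permutes {0..<n}" and "6 \<le> n"
  obtains D where "D \<subseteq> vertex_pairs n" and "D \<inter> (\<lambda>e. s ` e) ` D = {}"
    and "card {x. s x \<noteq> x} * n \<le> 24 * card D"
proof -
  define M where "M = {x. s x \<noteq> x}"
  have "M \<subseteq> {0..<n}"
    unfolding M_def using permutes_not_in[OF s] by fastforce
  then have "finite M" and "card M \<le> n"
    using finite_subset card_mono[of "{0..<n}" M] by auto
  obtain A0 where A0: "A0 \<subseteq> M" "A0 \<inter> s ` A0 = {}" "card M \<le> 3 * card A0"
    using exists_subset_disjoint_image[OF \<open>finite M\<close> permutes_inj[OF s]] by (auto simp: M_def)
  text \<open>Keep only about card M / 12 points of A0, so that at least n / 2 vertices remain outside A and s ` A.\<close>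
  define k where "k = (card M + 11) div 12"
  have "k \<le> card A0"
    using A0(3) by (simp add: k_def)
  then obtain A where A: "A \<subseteq> A0" "card A = k"
    by (meson obtain_subset_with_card_n)
  then have "A \<subseteq> {0..<n}" and "A \<inter> s ` A = {}"
    using A0(1,2) \<open>M \<subseteq> {0..<n}\<close> by blast+
  then obtain D where D: "D \<subseteq> vertex_pairs n" "D \<inter> (\<lambda>e. s ` e) ` D = {}" "k * (n - 2 * k) \<le> card D"
    using exists_vertex_pairs_disjoint_image[of A n s] unfolding A(2) by blast
  have "4 * k \<le> n"
    using \<open>card M \<le> n\<close> \<open>6 \<le> n\<close> by (simp add: k_def)
  then have "card M * n \<le> 12 * k * (2 * (n - 2 * k))"
    by (intro mult_mono) (auto simp: k_def)
  with D show thesis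
    using that by (simp add: M_def)
qed

lemma card_fixed_graphs_le_moved:
  assumes s: "s permutes {0..<n}" and "6 \<le> n"
  shows "real (card {E \<in> graphs n. permute_graph s E = E})
    \<le> 2 ^ card (vertex_pairs n) / (2 powr (real n / 24)) ^ card {x. s x \<noteq> x}"
proof -
  obtain D where D: "D \<subseteq> vertex_pairs n" "D \<inter> (\<lambda>e. s ` e) ` D = {}"
    and moved: "card {x. s x \<noteq> x} * n \<le> 24 * card D"
    using obtain_vertex_pairs_disjoint_image[OF assms] .
  have "(2 powr (real n / 24)) ^ card {x. s x \<noteq> x} = 2 powr (real (card {x. s x \<noteq> x} * n) / 24)"
    by (simp add: powr_power mult_ac)
  also have "\<dots> \<le> 2 powr real (card D)"
    using moved by (intro powr_mono) linarith+
  also have "\<dots> = 2 ^ card D"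
    by (simp add: powr_realpow)
  finally have "(2 powr (real n / 24)) ^ card {x. s x \<noteq> x} \<le> 2 ^ card D" .
  have "real (card {E \<in> graphs n. permute_graph s E = E}) * 2 ^ card D \<le> 2 ^ card (vertex_pairs n)"
    using of_nat_mono[OF card_fixed_graphs_le[OF s D]] by simp
  then have "real (card {E \<in> graphs n. permute_graph s E = E}) \<le> 2 ^ card (vertex_pairs n) / 2 ^ card D"
    by (simp add: field_simps)
  also have "\<dots> \<le> 2 ^ card (vertex_pairs n) / (2 powr (real n / 24)) ^ card {x. s x \<noteq> x}"
    using \<open>(2 powr (real n / 24)) ^ card {x. s x \<noteq> x} \<le> 2 ^ card D\<close> by (intro divide_left_mono) auto
  finally show ?thesis .
qed

lemma card_permutes_moved_le:
  assumes "finite S"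
  shows "card {s. s permutes S \<and> card {x. s x \<noteq> x} = m} \<le> card S ^ (2 * m)"
proof -
  let ?Ms = "{M. M \<subseteq> S \<and> card M = m}"
  have fin_Ms: "finite ?Ms"
    using assms by simp
  have fin_perms: "finite {s. s permutes M}" if "M \<in> ?Ms" for M
    using that assms by (intro finite_permutations) (auto intro: finite_subset)
  have "{s. s permutes S \<and> card {x. s x \<noteq> x} = m} \<subseteq> (\<Union>M\<in>?Ms. {s. s permutes M})"
  proof (rule subsetI)
    fix s assume "s \<in> {s. s permutes S \<and> card {x. s x \<noteq> x} = m}"
    then have "s permutes S" and "card {x. s x \<noteq> x} = m"
      by auto
    moreover have "s permutes {x. s x \<noteq> x}"
      using \<open>s permutes S\<close> by (auto simp: permutes_def)
    moreover have "{x. s x \<noteq> x} \<subseteq> S"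
      using permutes_not_in[OF \<open>s permutes S\<close>] by auto
    ultimately show "s \<in> (\<Union>M\<in>?Ms. {s. s permutes M})"
      by blast
  qed
  then have "card {s. s permutes S \<and> card {x. s x \<noteq> x} = m} \<le> card (\<Union>M\<in>?Ms. {s. s permutes M})"
    using fin_Ms fin_perms by (intro card_mono) auto
  also have "\<dots> \<le> (\<Sum>M\<in>?Ms. card {s. s permutes M})"
    using fin_Ms by (rule card_UN_le)
  also have "\<dots> = (\<Sum>M\<in>?Ms. fact m)"
    using assms by (intro sum.cong refl card_permutations) (auto intro: finite_subset)
  also have "\<dots> = (card S choose m) * fact m"
    using n_subsets[OF assms] by simp
  also have "\<dots> \<le> card S ^ m * card S ^ m"
  proof (cases "m \<le> card S")
    case True
    have "fact m \<le> m ^ m"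
      using fact_le_power[of m, where 'a = nat] by simp
    also have "\<dots> \<le> card S ^ m"
      using True by (rule power_mono) simp
    finally show ?thesis
      using binomial_le_pow[OF True] by (intro mult_mono) auto
  qed (simp add: binomial_eq_0)
  also have "\<dots> = card S ^ (2 * m)"
    by (simp add: power_add[symmetric] mult_2)
  finally show ?thesis .
qed

lemma sum_permutes_inverse_pow_moved_le:
  assumes "0 < y" and "real n ^ 2 \<le> y"
  shows "(\<Sum>s\<in>{s. s permutes {0..<n}} - {id}. 1 / y ^ card {x. s x \<noteq> x}) \<le> real n * (real n ^ 2 / y)"
proof -
  let ?P = "{s. s permutes {0..<n}} - {id}" and ?m = "\<lambda>s. card {x. s x \<noteq> x}"
  define x where "x = real n ^ 2 / y"
  have "0 \<le> x" and "x \<le> 1"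
    using assms by (auto simp: x_def)
  have fin: "finite ?P"
    using finite_permutations[of "{0..<n}"] by simp
  have range: "?m ` ?P \<subseteq> {1..n}"
  proof (rule image_subsetI)
    fix s assume "s \<in> ?P"
    then have "s permutes {0..<n}" and "s \<noteq> id"
      by auto
    then have "{x. s x \<noteq> x} \<subseteq> {0..<n}" and "{x. s x \<noteq> x} \<noteq> {}"
      using permutes_not_in by (fastforce, auto)
    then show "?m s \<in> {1..n}"
      using card_mono[of "{0..<n}" "{x. s x \<noteq> x}"] by (auto simp: Suc_le_eq card_gt_0_iff finite_subset)
  qed
  have "(\<Sum>s\<in>?P. 1 / y ^ ?m s) = (\<Sum>j\<in>{1..n}. \<Sum>s\<in>{s \<in> ?P. ?m s = j}. 1 / y ^ ?m s)"
    by (rule sum.group[OF fin finite_atLeastAtMost range, symmetric])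
  also have "\<dots> = (\<Sum>j\<in>{1..n}. real (card {s \<in> ?P. ?m s = j}) / y ^ j)"
    by simp
  also have "\<dots> \<le> (\<Sum>j\<in>{1..n}. x)"
  proof (rule sum_mono)
    fix j assume j: "j \<in> {1..n}"
    have "card {s \<in> ?P. ?m s = j} \<le> card {s. s permutes {0..<n} \<and> ?m s = j}"
      using finite_permutations[of "{0..<n}"] by (intro card_mono) auto
    also have "\<dots> \<le> n ^ (2 * j)"
      using card_permutes_moved_le[of "{0..<n}" j] by simp
    finally have "real (card {s \<in> ?P. ?m s = j}) / y ^ j \<le> real n ^ (2 * j) / y ^ j"
      using \<open>0 < y\<close> by (intro divide_right_mono) (simp_all add: of_nat_le_iff[symmetric])
    also have "\<dots> = x ^ j"
      by (simp add: x_def power_mult power_divide)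
    also have "\<dots> \<le> x"
      using j \<open>0 \<le> x\<close> \<open>x \<le> 1\<close> by (simp add: power_decreasing[of 1 j x, simplified])
    finally show "real (card {s \<in> ?P. ?m s = j}) / y ^ j \<le> x" .
  qed
  finally show ?thesis
    by (simp add: x_def)
qed

lemma sum_card_fixed_graphs_le:
  assumes "6 \<le> n" and "real n ^ 2 \<le> 2 powr (real n / 24)"
  shows "real (\<Sum>s\<in>{s. s permutes {0..<n}} - {id}. card {E \<in> graphs n. permute_graph s E = E})
    \<le> 2 ^ card (vertex_pairs n) * (real n * (real n ^ 2 / 2 powr (real n / 24)))"
proof -
  let ?P = "{s. s permutes {0..<n}} - {id}" and ?y = "2 powr (real n / 24)"
  have "real (\<Sum>s\<in>?P. card {E \<in> graphs n. permute_graph s E = E})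
      = (\<Sum>s\<in>?P. real (card {E \<in> graphs n. permute_graph s E = E}))"
    by simp
  also have "\<dots> \<le> (\<Sum>s\<in>?P. 2 ^ card (vertex_pairs n) * (1 / ?y ^ card {x. s x \<noteq> x}))"
    using card_fixed_graphs_le_moved \<open>6 \<le> n\<close> by (intro sum_mono) auto
  also have "\<dots> = 2 ^ card (vertex_pairs n) * (\<Sum>s\<in>?P. 1 / ?y ^ card {x. s x \<noteq> x})"
    by (simp add: sum_distrib_left)
  also have "\<dots> \<le> 2 ^ card (vertex_pairs n) * (real n * (real n ^ 2 / ?y))"
    using assms(2) by (intro mult_left_mono sum_permutes_inverse_pow_moved_le) auto
  finally show ?thesis .
qed

section \<open>Counting isomorphism classes\<close>

lemma sum_card_filter_swap:
  assumes "finite A" and "finite B"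
  shows "(\<Sum>a\<in>A. card {b \<in> B. R a b}) = (\<Sum>b\<in>B. card {a \<in> A. R a b})"
proof -
  have count: "card {x \<in> X. P x} = (\<Sum>x\<in>X. if P x then 1 else 0)" if "finite X" for X :: "'c set" and P
    using sum.inter_filter[OF that, of "\<lambda>_. 1" P] by (simp only: card_eq_sum)
  have "(\<Sum>a\<in>A. card {b \<in> B. R a b}) = (\<Sum>a\<in>A. \<Sum>b\<in>B. if R a b then 1 else 0)"
    by (rule sum.cong[OF refl]) (rule count[OF assms(2)])
  also have "\<dots> = (\<Sum>b\<in>B. \<Sum>a\<in>A. if R a b then 1 else 0)"
    by (rule sum.swap)
  also have "\<dots> = (\<Sum>b\<in>B. card {a \<in> A. R a b})"
    by (rule sum.cong[OF refl]) (rule count[OF assms(1), symmetric])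
  finally show ?thesis .
qed

lemma sum_card_automorphisms_le:
  assumes X: "X \<subseteq> graphs n"
  shows "(\<Sum>G\<in>X. card (automorphisms n G))
    \<le> card X + (\<Sum>s\<in>{s. s permutes {0..<n}} - {id}. card {E \<in> graphs n. permute_graph s E = E})"
proof -
  let ?P = "{s. s permutes {0..<n}} - {id}"
  have fin_P: "finite ?P"
    using finite_permutations[of "{0..<n}"] by simp
  have "card (automorphisms n G) \<le> 1 + card {s \<in> ?P. permute_graph s G = G}" for G
  proof -
    have "automorphisms n G \<subseteq> insert id {s \<in> ?P. permute_graph s G = G}"
      by (auto simp: automorphisms_def)
    then have "card (automorphisms n G) \<le> card (insert id {s \<in> ?P. permute_graph s G = G})"
      using fin_P by (intro card_mono) auto
    also have "\<dots> \<le> 1 + card {s \<in> ?P. permute_graph s G = G}"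
      by (simp add: card_insert_le_m1 card_insert_if fin_P)
    finally show ?thesis .
  qed
  then have "(\<Sum>G\<in>X. card (automorphisms n G)) \<le> (\<Sum>G\<in>X. 1 + card {s \<in> ?P. permute_graph s G = G})"
    by (rule sum_mono)
  also have "\<dots> = card X + (\<Sum>G\<in>X. card {s \<in> ?P. permute_graph s G = G})"
    by (subst sum.distrib) simp
  also have "(\<Sum>G\<in>X. card {s \<in> ?P. permute_graph s G = G}) \<le> (\<Sum>G\<in>graphs n. card {s \<in> ?P. permute_graph s G = G})"
    by (rule sum_mono2[OF finite_graphs X]) simp
  also have "\<dots> = (\<Sum>s\<in>?P. card {G \<in> graphs n. permute_graph s G = G})"
    using finite_graphs fin_P by (rule sum_card_filter_swap)
  finally show ?thesis
    by simp
qed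

lemma fact_mult_card_non_diameter_2_classes_le:
  "fact n * card (non_diameter_2_classes n)
    \<le> card (non_diameter_2_graphs n)
      + (\<Sum>s\<in>{s. s permutes {0..<n}} - {id}. card {E \<in> graphs n. permute_graph s E = E})"
proof -
  let ?C = "non_diameter_2_classes n"
  have "?C \<subseteq> graphs n // iso_rel n"
    by (auto simp: non_diameter_2_classes_def iso_classes_eq)
  then have disj: "\<forall>C\<in>?C. \<forall>C'\<in>?C. C \<noteq> C' \<longrightarrow> C \<inter> C' = {}"
    using quotient_disj[OF equiv_iso_rel] by blast
  have "fact n * card ?C = (\<Sum>C\<in>?C. fact n)"
    by simp
  also have "\<dots> \<le> (\<Sum>C\<in>?C. \<Sum>G\<in>C. card (automorphisms n G))"
    by (intro sum_mono fact_le_sum_card_automorphisms) (simp add: non_diameter_2_classes_def)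
  also have "\<dots> = (\<Sum>G\<in>\<Union>?C. card (automorphisms n G))"
  proof -
    have "\<forall>C\<in>?C. finite C"
      using finite_iso_class by (auto simp: non_diameter_2_classes_def)
    then show ?thesis
      by (rule sum.Union_disjoint[OF _ disj, symmetric, unfolded comp_def])
  qed
  also have "\<dots> \<le> card (non_diameter_2_graphs n)
      + (\<Sum>s\<in>{s. s permutes {0..<n}} - {id}. card {E \<in> graphs n. permute_graph s E = E})"
  proof -
    have "\<Union>?C \<subseteq> non_diameter_2_graphs n"
      using iso_class_subset_graphs by (fastforce simp: non_diameter_2_classes_def non_diameter_2_graphs_def)
    moreover have "finite (non_diameter_2_graphs n)"
      using finite_graphs by (simp add: non_diameter_2_graphs_def)
    ultimately have "(\<Sum>G\<in>\<Union>?C. card (automorphisms n G)) \<le> (\<Sum>G\<in>non_diameter_2_graphs n. card (automorphisms n G))"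
      by (intro sum_mono2) auto
    also have "\<dots> \<le> card (non_diameter_2_graphs n)
        + (\<Sum>s\<in>{s. s permutes {0..<n}} - {id}. card {E \<in> graphs n. permute_graph s E = E})"
      by (rule sum_card_automorphisms_le) (simp add: non_diameter_2_graphs_def)
    finally show ?thesis .
  qed
  finally show ?thesis .
qed

lemma unique_classes_ratio_le:
  assumes "6 \<le> n" and "real n ^ 2 \<le> 2 powr (real n / 24)"
  shows "real (card (unique_classes n)) / real (card (iso_classes n))
    \<le> fact n / 2 ^ card (vertex_pairs n) + real n ^ 2 * (3 / 4) ^ (n - 2)
      + real n * (real n ^ 2 / 2 powr (real n / 24))"
proof -
  let ?N = "2 ^ card (vertex_pairs n) :: real" and ?IC = "real (card (iso_classes n))"
    and ?B = "real (card (non_diameter_2_classes n))"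
    and ?Fix = "\<Sum>s\<in>{s. s permutes {0..<n}} - {id}. card {E \<in> graphs n. permute_graph s E = E}"
  have classes: "?N \<le> ?IC * fact n"
    using of_nat_mono[OF card_graphs_le_card_iso_classes_mult_fact[of n]] by simp
  then have pos: "0 < ?IC * fact n"
    by (smt (verit) zero_less_power)
  then have "?IC > 0"
    by (simp add: zero_less_mult_iff)
  have unique: "real (card (unique_classes n)) \<le> ?B + 1"
    using of_nat_mono[where 'a = real, OF card_unique_classes_le[of n]] by simp
  have burnside: "fact n * ?B \<le> real (card (non_diameter_2_graphs n)) + real ?Fix"
    using of_nat_mono[OF fact_mult_card_non_diameter_2_classes_le[of n]] by simp
  have "real (card (unique_classes n)) / ?IC \<le> (?B + 1) / ?IC"
    using unique \<open>?IC > 0\<close> by (simp add: divide_right_mono)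
  also have "\<dots> = (?B + 1) * fact n / (?IC * fact n)"
    by simp
  also have "\<dots> \<le> (?B + 1) * fact n / ?N"
    using classes pos by (intro divide_left_mono) auto
  also have "\<dots> = fact n / ?N + fact n * ?B / ?N"
    by (simp add: field_simps)
  also have "\<dots> \<le> fact n / ?N + (real (card (non_diameter_2_graphs n)) + real ?Fix) / ?N"
    using burnside by (intro add_left_mono divide_right_mono) auto
  also have "\<dots> \<le> fact n / ?N + (?N * (real n ^ 2 * (3 / 4) ^ (n - 2))
      + ?N * (real n * (real n ^ 2 / 2 powr (real n / 24)))) / ?N"
    using card_non_diameter_2_graphs_le sum_card_fixed_graphs_le[OF assms]
    by (intro add_left_mono divide_right_mono add_mono) auto
  also have "\<dots> = fact n / ?N + real n ^ 2 * (3 / 4) ^ (n - 2) + real n * (real n ^ 2 / 2 powr (real n / 24))"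
    by (simp add: add_divide_distrib)
  finally show ?thesis .
qed

section \<open>Asymptotics\<close>

lemma fact_div_two_pow_vertex_pairs_tendsto_0:
  "(\<lambda>n. fact n / 2 ^ card (vertex_pairs n) :: real) \<longlonglongrightarrow> 0"
proof (rule tendsto_sandwich[of "\<lambda>_. 0" _ _ "\<lambda>n. exp (real n * ln (real n) - ln 2 * (real n * (real n - 1) / 2))"])
  show "\<forall>\<^sub>F n in sequentially. fact n / 2 ^ card (vertex_pairs n)
      \<le> exp (real n * ln (real n) - ln 2 * (real n * (real n - 1) / 2))"
  proof (rule eventually_sequentiallyI[of 1])
    fix n :: nat assume "1 \<le> n"
    have "real (card (vertex_pairs n)) = real n * (real n - 1) / 2"
      unfolding card_vertex_pairs choose_two using \<open>1 \<le> n\<close>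
      by (simp add: real_of_nat_div of_nat_diff)
    then have "(2::real) ^ card (vertex_pairs n) = exp (ln 2 * (real n * (real n - 1) / 2))"
      by (simp add: powr_realpow[symmetric] powr_def mult.commute)
    moreover have "(fact n :: real) \<le> exp (real n * ln (real n))"
      using fact_le_power[of n, where 'a = real] \<open>1 \<le> n\<close> by (simp add: exp_of_nat_mult)
    ultimately show "fact n / 2 ^ card (vertex_pairs n)
        \<le> exp (real n * ln (real n) - ln 2 * (real n * (real n - 1) / 2))"
      by (simp add: exp_diff divide_right_mono)
  qed
  show "(\<lambda>n. exp (real n * ln (real n) - ln 2 * (real n * (real n - 1) / 2))) \<longlonglongrightarrow> 0"
    by real_asymp
qed auto

lemma square_mult_three_quarters_pow_tendsto_0:
  "(\<lambda>n. real n ^ 2 * (3 / 4) ^ (n - 2) :: real) \<longlonglongrightarrow> 0"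
proof (rule Lim_transform_eventually)
  show "(\<lambda>n. 16 / 9 * (real n ^ 2 * (3 / 4) ^ n) :: real) \<longlonglongrightarrow> 0"
    by real_asymp
  show "\<forall>\<^sub>F n in sequentially. 16 / 9 * (real n ^ 2 * (3 / 4) ^ n) = real n ^ 2 * (3 / 4) ^ (n - 2)"
  proof (rule eventually_sequentiallyI[of 2])
    fix n :: nat assume "2 \<le> n"
    then obtain k where "n = k + 2"
      by (metis le_add_diff_inverse2)
    then show "16 / 9 * (real n ^ 2 * (3 / 4) ^ n) = real n ^ 2 * (3 / 4) ^ (n - 2)"
      by (simp add: power_add)
  qed
qed

theorem theorem4:
  shows "(\<lambda>n. real (card (unique_classes n)) / real (card (iso_classes n))) \<longlonglongrightarrow> 0"
proof -
  define bound where "bound n = fact n / 2 ^ card (vertex_pairs n) + real n ^ 2 * (3 / 4) ^ (n - 2)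
    + real n * (real n ^ 2 / 2 powr (real n / 24))" for n
  have "\<forall>\<^sub>F n in sequentially. real n ^ 2 \<le> 2 powr (real n / 24)"
    by real_asymp
  then have upper: "\<forall>\<^sub>F n in sequentially.
      real (card (unique_classes n)) / real (card (iso_classes n)) \<le> bound n"
    using eventually_ge_at_top[of 6] unfolding bound_def by eventually_elim (rule unique_classes_ratio_le)
  have "(\<lambda>n. real n * (real n ^ 2 / 2 powr (real n / 24))) \<longlonglongrightarrow> 0"
    by real_asymp
  then have limit: "bound \<longlonglongrightarrow> 0"
    unfolding bound_def
    using tendsto_add[OF tendsto_add[OF fact_div_two_pow_vertex_pairs_tendsto_0
          square_mult_three_quarters_pow_tendsto_0]] by simp
  show ?thesis
    by (rule tendsto_sandwich[OF _ upper tendsto_const limit]) simp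
qed

end
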